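(* Let $K$ be a field, $c\in K\setminus\{0\}$, $n\ge1$, let $f$ be a $c$-frieze of order $n$ over $K$, and put $s=f(0,n)$, $t=f(1,n+1)$. Then for every integer $k$ with $-1\le k\le n+2$ and every $i\in\mathbb{Z}$: (a) $f(2i,2i+k-1)=\dfrac{(-c)^k}{t}f(2i+k+1,2i+n+1)$; (b) $f(2i+1,2i+k)=\dfrac{(-c)^k}{s}f(2i+k+2,2i+n+2)$.
   Context: The $c$-continuant polynomials $P_k=P_k^c$ ($k\ge-1$) are defined by $P_{-1}=0$, $P_0=1$, and for $k\ge1$, $P_k(x_1,\dots,x_k)=x_kP_{k-1}(x_1,\dots,x_{k-1})+cP_{k-2}(x_1,\dots,x_{k-2})$. A family $(x_i)_{i\in\mathbb{Z}}$ in $K$ is $n$-admissible if $P_{n+2}(x_i,\dots,x_{i+n+1})=0$ for all $i$. Let $\mathbb{B}_n=\{(i,j)\in\mathbb{Z}^2:-2\le j-i\le n+1\}$. A $c$-frieze of order $n$ is a function $f:\mathbb{B}_n\to K$ for which there is an $n$-admissible family $(x_i)$ with $f(i,j)=P_{j-i+1}(x_i,\dots,x_j)$ for all $(i,j)\in\mathbb{B}_n$. Row $k$ of $f$ consists of the values $f(i,i+k-1)$; the lemma relates row $k$ to row $n-k+1$. It is known that $st=(-c)^{n+1}$, so $s,t\neq0$. *)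

theory Defs
  imports Main
begin

text \<open>Continuant polynomials evaluated: contP c x k = P_k(x 1, ..., x k) for k >= 0.\<close>
fun contP :: "'a::comm_ring_1 \<Rightarrow> (nat \<Rightarrow> 'a) \<Rightarrow> nat \<Rightarrow> 'a" where
  "contP c x 0 = 1"
| "contP c x (Suc 0) = x 1"
| "contP c x (Suc (Suc k)) = x (Suc (Suc k)) * contP c x (Suc k) + c * contP c x k"

text \<open>Integer-indexed version, with P_{-1} = 0 (used only for k >= -1).\<close>
definition contPi :: "'a::comm_ring_1 \<Rightarrow> (nat \<Rightarrow> 'a) \<Rightarrow> int \<Rightarrow> 'a" where
  "contPi c x k = (if k < 0 then 0 else contP c x (nat k))"

text \<open>P_k(x_i, ..., x_{i+k-1}) for a family indexed by integers.\<close>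
definition contAt :: "'a::comm_ring_1 \<Rightarrow> (int \<Rightarrow> 'a) \<Rightarrow> int \<Rightarrow> int \<Rightarrow> 'a" where
  "contAt c x i k = contPi c (\<lambda>m. x (i + int m - 1)) k"

definition admissible :: "'a::comm_ring_1 \<Rightarrow> nat \<Rightarrow> (int \<Rightarrow> 'a) \<Rightarrow> bool" where
  "admissible c n x \<longleftrightarrow> (\<forall>i. contAt c x i (int n + 2) = 0)"

definition in_Bn :: "nat \<Rightarrow> int \<Rightarrow> int \<Rightarrow> bool" where
  "in_Bn n i j \<longleftrightarrow> -2 \<le> j - i \<and> j - i \<le> int n + 1"

text \<open>A c-frieze of order n; f is a total function but only its values on B_n matter.\<close>
definition is_frieze :: "'a::comm_ring_1 \<Rightarrow> nat \<Rightarrow> (int \<Rightarrow> int \<Rightarrow> 'a) \<Rightarrow> bool" where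
  "is_frieze c n f \<longleftrightarrow> (\<exists>x. admissible c n x \<and>
      (\<forall>i j. in_Bn n i j \<longrightarrow> f i j = contAt c x i (j - i + 1)))"

end

theory Submission
  imports Defs
begin

text \<open>Let \<open>x\<close> be the admissible family of the frieze and \<open>R i = P_{n+1}(x_i, ..., x_{i+n})\<close>
  its row \<open>n + 1\<close>. The Casorati determinant
  \<open>P_m(x_i,...) P_m(x_{i+1},...) - P_{m+1}(x_i,...) P_{m-1}(x_{i+1},...)\<close> equals \<open>(-c)^m\<close>; since
  row \<open>n + 2\<close> vanishes, this gives \<open>R i * R (i + 1) = (-c)^(n+1) \<noteq> 0\<close>, so \<open>R\<close> is 2-periodic
  with values \<open>s\<close> and \<open>t\<close>. For fixed \<open>I\<close>, both \<open>k \<mapsto> P_k(x_I, ...) R (I + 1)\<close> and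
  \<open>k \<mapsto> (-c)^k P_{n+1-k}(x_{I+k+1}, ...)\<close> satisfy the same two-term recursion in \<open>k\<close> (the first
  by expanding the continuant at its last entry, the second at its first one) and agree for
  \<open>k = -1, 0\<close>, hence for all \<open>-1 \<le> k \<le> n + 2\<close>.\<close>

lemma contP_Suc_Suc_first:
  "contP c y (Suc (Suc k)) =
     y 1 * contP c (\<lambda>m. y (m + 1)) (Suc k) + c * contP c (\<lambda>m. y (m + 2)) k"
proof (induction k rule: nat_less_induct)
  case (1 k)
  show ?case
  proof (cases k)
    case 0
    then show ?thesis by (simp add: algebra_simps)
  next
    case (Suc j)
    show ?thesis
    proof (cases j)
      case 0
      then show ?thesis using Suc by (simp add: algebra_simps numeral_eq_Suc)
    next
      case (Suc l)
      have IH1: "contP c y (Suc (Suc j)) =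
          y 1 * contP c (\<lambda>m. y (m + 1)) (Suc j) + c * contP c (\<lambda>m. y (m + 2)) j"
        using "1" \<open>k = Suc j\<close> by simp
      have IH2: "contP c y (Suc (Suc l)) =
          y 1 * contP c (\<lambda>m. y (m + 1)) (Suc l) + c * contP c (\<lambda>m. y (m + 2)) l"
        using "1" \<open>k = Suc j\<close> Suc by simp
      have "contP c (\<lambda>m. y (m + 1)) (Suc (Suc j)) =
          y (Suc (Suc (Suc j))) * contP c (\<lambda>m. y (m + 1)) (Suc j) + c * contP c (\<lambda>m. y (m + 1)) j"
        by simp
      moreover have "contP c (\<lambda>m. y (m + 2)) (Suc (Suc l)) =
          y (Suc (Suc (Suc j))) * contP c (\<lambda>m. y (m + 2)) (Suc l) + c * contP c (\<lambda>m. y (m + 2)) l"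
        using Suc by (simp add: numeral_eq_Suc)
      moreover have "contP c y (Suc (Suc (Suc (Suc l)))) =
          y (Suc (Suc (Suc (Suc l)))) * contP c y (Suc (Suc (Suc l))) + c * contP c y (Suc (Suc l))"
        by (rule contP.simps(3))
      ultimately show ?thesis
        unfolding \<open>k = Suc j\<close> Suc using IH1 IH2 Suc
        by (simp del: contP.simps add: algebra_simps)
    qed
  qed
qed

lemma contAt_add_two_last:
  assumes "-1 \<le> k"
  shows "contAt c x i (k + 2) = x (i + k + 1) * contAt c x i (k + 1) + c * contAt c x i k"
proof (cases "k = -1")
  case True
  then show ?thesis by (simp add: contAt_def contPi_def)
next
  case False
  with assms obtain m where "k = int m" using nonneg_int_cases[of k] by force
  moreover have "nat (int m + 2) = Suc (Suc m)" "nat (int m + 1) = Suc m" by simp_all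
  ultimately show ?thesis by (simp add: contAt_def contPi_def algebra_simps)
qed

lemma contAt_add_two_first:
  assumes "-1 \<le> k"
  shows "contAt c x i (k + 2) = x i * contAt c x (i + 1) (k + 1) + c * contAt c x (i + 2) k"
proof (cases "k = -1")
  case True
  then show ?thesis by (simp add: contAt_def contPi_def)
next
  case False
  with assms obtain m where "k = int m" using nonneg_int_cases[of k] by force
  moreover have "nat (int m + 2) = Suc (Suc m)" "nat (int m + 1) = Suc m" by simp_all
  moreover have "(\<lambda>l. x (i + int (l + 1) - 1)) = (\<lambda>l. x (i + 1 + int l - 1))"
    and "(\<lambda>l. x (i + int (l + 2) - 1)) = (\<lambda>l. x (i + 2 + int l - 1))"
    by (simp_all add: algebra_simps)
  ultimately show ?thesis
    using contP_Suc_Suc_first[of c "\<lambda>l. x (i + int l - 1)" m]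
    by (simp add: contAt_def contPi_def)
qed

lemma contAt_casorati:
  "contAt c x i (int m) * contAt c x (i + 1) (int m)
     - contAt c x i (int m + 1) * contAt c x (i + 1) (int m - 1) = (-c) ^ m"
proof (induction m)
  case 0
  then show ?case by (simp add: contAt_def contPi_def)
next
  case (Suc m)
  have last_i: "contAt c x i (int m + 2) =
      x (i + int m + 1) * contAt c x i (int m + 1) + c * contAt c x i (int m)"
    using contAt_add_two_last[of "int m" c x i] by simp
  have last_i1: "contAt c x (i + 1) (int m + 1) =
      x (i + int m + 1) * contAt c x (i + 1) (int m) + c * contAt c x (i + 1) (int m - 1)"
    using contAt_add_two_last[of "int m - 1" c x "i + 1"] by (simp add: algebra_simps)
  have "contAt c x i (int (Suc m)) * contAt c x (i + 1) (int (Suc m))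
      - contAt c x i (int (Suc m) + 1) * contAt c x (i + 1) (int (Suc m) - 1)
      = contAt c x i (int m + 1) * contAt c x (i + 1) (int m + 1)
        - contAt c x i (int m + 2) * contAt c x (i + 1) (int m)"
    by (simp add: algebra_simps)
  also have "\<dots> = - c * (contAt c x i (int m) * contAt c x (i + 1) (int m)
      - contAt c x i (int m + 1) * contAt c x (i + 1) (int m - 1))"
    unfolding last_i last_i1 by (simp add: algebra_simps)
  also have "\<dots> = (-c) ^ Suc m" using Suc by simp
  finally show ?case .
qed

lemma admissible_consecutive_rows_mult:
  assumes "admissible c n x"
  shows "contAt c x i (int n + 1) * contAt c x (i + 1) (int n + 1) = (-c) ^ (n + 1)"
proof -
  have "int (n + 1) + 1 = int n + 2" by simp
  then have "contAt c x i (int (n + 1) + 1) = 0"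
    using assms by (simp only: admissible_def)
  then show ?thesis
    using contAt_casorati[of c x i "n + 1"] by (simp add: ac_simps)
qed

lemma admissible_row_periodic:
  fixes c :: "'a::field"
  assumes "c \<noteq> 0" and "admissible c n x"
  shows "contAt c x (i + 2 * j) (int n + 1) = contAt c x i (int n + 1)"
proof -
  define R where "R i = contAt c x i (int n + 1)" for i
  have mult: "R i * R (i + 1) = (-c) ^ (n + 1)" for i
    unfolding R_def by (rule admissible_consecutive_rows_mult[OF assms(2)])
  have step: "R (i + 2) = R i" for i
  proof -
    have "R (i + 1) * R i = R (i + 1) * R (i + 2)"
      using mult[of i] mult[of "i + 1"] by (simp add: algebra_simps)
    moreover have "R (i + 1) \<noteq> 0" using mult[of i] assms(1) by auto
    ultimately show ?thesis by simp
  qed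
  have "R (i + 2 * j) = R i"
  proof (induction j rule: int_induct[where k = 0])
    case base
    then show ?case by simp
  next
    case (step1 j)
    then show ?case using step[of "i + 2 * j"] by (simp add: algebra_simps)
  next
    case (step2 j)
    then show ?case using step[of "i + 2 * (j - 1)"] by (simp add: algebra_simps)
  qed
  then show ?thesis unfolding R_def .
qed

lemma contAt_reflection_step:
  fixes c :: "'a::field"
  assumes "c \<noteq> 0" and "-1 \<le> k" "k \<le> N"
    and "contAt c x I k * T = (-c) powi k * contAt c x (I + k + 1) (N + 1 - k)"
    and "contAt c x I (k + 1) * T = (-c) powi (k + 1) * contAt c x (I + k + 2) (N - k)"
  shows "contAt c x I (k + 2) * T = (-c) powi (k + 2) * contAt c x (I + k + 3) (N - 1 - k)"
proof -
  have first: "contAt c x (I + k + 1) (N + 1 - k) =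
      x (I + k + 1) * contAt c x (I + k + 2) (N - k) + c * contAt c x (I + k + 3) (N - 1 - k)"
    using contAt_add_two_first[of "N - 1 - k" c x "I + k + 1"] assms(3)
    by (simp add: algebra_simps)
  have pow1: "(-c) powi (k + 1) = (-c) powi k * (-c)"
    using assms(1) by (simp add: power_int_add_1)
  have pow2: "(-c) powi (k + 2) = (-c) powi k * c\<^sup>2"
    using assms(1) by (simp add: power_int_add)
  have "contAt c x I (k + 2) * T =
      x (I + k + 1) * (contAt c x I (k + 1) * T) + c * (contAt c x I k * T)"
    using contAt_add_two_last[of k c x I] assms(2) by (simp add: algebra_simps)
  also have "\<dots> = (-c) powi k * c\<^sup>2 * contAt c x (I + k + 3) (N - 1 - k)"
    unfolding assms(4,5) pow1 first by (simp add: algebra_simps power2_eq_square)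
  finally show ?thesis unfolding pow2 .
qed

lemma admissible_reflection:
  fixes c :: "'a::field"
  assumes "c \<noteq> 0" and "admissible c n x" and "-1 \<le> k" "k \<le> int n + 2"
  shows "contAt c x I k * contAt c x (I + 1) (int n + 1)
           = (-c) powi k * contAt c x (I + k + 1) (int n + 1 - k)"
proof -
  define P where "P k \<longleftrightarrow> contAt c x I k * contAt c x (I + 1) (int n + 1)
      = (-c) powi k * contAt c x (I + k + 1) (int n + 1 - k)" for k
  have "contAt c x I (int n + 2) = 0"
    using assms(2) by (simp add: admissible_def)
  then have start: "P (-1)" "P 0"
    by (simp_all add: P_def contAt_def contPi_def add.commute)
  have pairs: "int m \<le> int n + 2 \<Longrightarrow> P (int m - 1) \<and> P (int m)" for m
  proof (induction m)
    case 0
    then show ?case using start by simp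
  next
    case (Suc m)
    then have "P (int m - 1)" "P (int m)" by simp_all
    then have "P (int m - 1 + 2)"
      using contAt_reflection_step[OF assms(1), of "int m - 1" "int n" x I "contAt c x (I + 1) (int n + 1)"] Suc.prems
      unfolding P_def by (simp add: algebra_simps)
    with \<open>P (int m)\<close> show ?case by (simp add: algebra_simps)
  qed
  have "P k"
  proof (cases "k = -1")
    case True
    with start show ?thesis by simp
  next
    case False
    with assms(3) have "int (nat k) = k" by simp
    with pairs[of "nat k"] assms(4) show ?thesis by simp
  qed
  then show ?thesis unfolding P_def .
qed

theorem mainTheorem10:
  fixes c :: "'a::field" and n :: nat and f :: "int \<Rightarrow> int \<Rightarrow> 'a"
  assumes "c \<noteq> 0" and "n \<ge> 1" and "is_frieze c n f"
    and "s = f 0 (int n)" and "t = f 1 (int n + 1)"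
  shows "\<forall>k i. -1 \<le> k \<and> k \<le> int n + 2 \<longrightarrow>
           f (2*i) (2*i + k - 1) = ((-c) powi k / t) * f (2*i + k + 1) (2*i + int n + 1)
         \<and> f (2*i + 1) (2*i + k) = ((-c) powi k / s) * f (2*i + k + 2) (2*i + int n + 2)"
proof (intro allI impI)
  fix k i :: int
  assume k: "-1 \<le> k \<and> k \<le> int n + 2"
  obtain x where adm: "admissible c n x"
    and fx: "\<And>i j. in_Bn n i j \<Longrightarrow> f i j = contAt c x i (j - i + 1)"
    using assms(3) unfolding is_frieze_def by blast
  have s: "s = contAt c x (2*i + 2) (int n + 1)"
    using assms(4) fx[of 0 "int n"] admissible_row_periodic[OF assms(1) adm, of 0 "i + 1"]
    by (simp add: in_Bn_def algebra_simps)
  have t: "t = contAt c x (2*i + 1) (int n + 1)"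
    using assms(5) fx[of 1 "int n + 1"] admissible_row_periodic[OF assms(1) adm, of 1 i]
    by (simp add: in_Bn_def algebra_simps)
  have "s \<noteq> 0" "t \<noteq> 0"
    using admissible_consecutive_rows_mult[OF adm, of "2*i + 1"] assms(1) s t
    by (auto simp: add.commute)
  moreover have "f (2*i) (2*i + k - 1) * t = (-c) powi k * f (2*i + k + 1) (2*i + int n + 1)"
    using admissible_reflection[OF assms(1) adm, of k "2*i"] k fx t
    by (simp add: in_Bn_def algebra_simps)
  moreover have "f (2*i + 1) (2*i + k) * s = (-c) powi k * f (2*i + k + 2) (2*i + int n + 2)"
    using admissible_reflection[OF assms(1) adm, of k "2*i + 1"] k fx s
    by (simp add: in_Bn_def algebra_simps)
  ultimately show "f (2*i) (2*i + k - 1) = ((-c) powi k / t) * f (2*i + k + 1) (2*i + int n + 1)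
      \<and> f (2*i + 1) (2*i + k) = ((-c) powi k / s) * f (2*i + k + 2) (2*i + int n + 2)"
    by (simp add: field_simps)
qed

end
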